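(* Let $0\le r\le m$, $H\in\mathcal G(m,r;2)$, $\mathbf S_r\in\mathrm{Sym}(r;2)$ and $\mathbf b\in\mathbb F_2^m$. Then $$\mathbf w^{H,\mathbf S_r}_{\mathbf b}=\mathbf G_D(\mathbf P_{\mathcal I}^T)\,\mathbf G_U(\tilde{\mathbf S}_r)\,\mathbf G_\Omega(r)\,\mathbf Z(m,r)\,\mathbf e_{\mathbf b},$$ where $\mathbf Z(m,r)=\mathbf I_{2^r}\otimes\sigma_z^{\otimes(m-r)}$. In particular each binary subspace chirp is, up to a sign $\pm1$, the $\mathbf b$-th column of the unitary matrix $\mathbf G_D(\mathbf P_{\mathcal I}^T)\mathbf G_U(\tilde{\mathbf S}_r)\mathbf G_\Omega(r)$.
   Context: Fix $m\ge1$, $N=2^m$. Binary vectors are columns over $\mathbb F_2$; $\mathrm{Sym}(r;2)$ is the set of symmetric binary $r\times r$ matrices, $\mathcal G(m,r;2)$ the set of $r$-dimensional subspaces of $\mathbb F_2^m$. The standard basis of $\mathbb C^N=(\mathbb C^2)^{\otimes m}$ is $\{\mathbf e_{\mathbf v}=\mathbf e_{v_1}\otimes\cdots\otimes\mathbf e_{v_m}:\mathbf v\in\mathbb F_2^m\}$ and vectors of $\mathbb C^N$ are indexed by $\mathbb F_2^m$. Whenever a binary expression appears in an exponent of $i$, binary entries are lifted to the integers $0,1$ and the expression is evaluated in $\mathbb Z$ (equivalently mod 4). $\sigma_z=\mathrm{diag}(1,-1)$. Clifford-type matrices: for $\mathbf Q\in\mathrm{GL}(m;2)$, $\mathbf G_D(\mathbf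 Q)$ is the permutation matrix with $\mathbf e_{\mathbf v}\mapsto\mathbf e_{\mathbf Q^T\mathbf v}$; for $\mathbf S\in\mathrm{Sym}(m;2)$, $\mathbf G_U(\mathbf S)=\mathrm{diag}(i^{\mathbf v^T\mathbf S\mathbf v})_{\mathbf v\in\mathbb F_2^m}$; $\mathbf G_\Omega(r)=\mathbf H_2^{\otimes r}\otimes\mathbf I_{2^{m-r}}$ with $\mathbf H_2=\frac1{\sqrt2}\begin{pmatrix}1&1\\1&-1\end{pmatrix}$. Echelon data: for $0\le r\le m$ and $H\in\mathcal G(m,r;2)$, let $\mathbf H_{\mathcal I}$ be the unique $m\times r$ binary matrix in column reduced echelon form with column space $H$: there are indices $i_1<\dots<i_r$, $\mathcal I=\{i_1,\dots,i_r\}$, such that rows $i_1,\dots,i_r$ of $\mathbf H_{\mathcal I}$ form $\mathbf I_r$ and column $j$ of $\mathbf H_{\mathcal I}$ is zero in all rows above row $i_j$. Let $\mathbf I_{\mathcal I}$ (resp. $\mathbf I_{\tilde{\mathcal I}}$) be the $m\times r$ (resp. $m\times(m-r)$) matrix whose columns are the standard basis vectors $\mathbf e_i$ with $i\in\mathcal I$ (resp. $i\notin\mathcal I$), in increasing order of $i$. Put $\mathbf P_{\mathcal I}=[\mathbf H_{\mathcal I}\ \ \mathbf I_{\tilde{\mathcal I}}]\in\mathrm{GL}(m;2)$, and define the $m\times(m-r)$ matrix $\tilde{\mathbf H}_{\mathcal I}$ by $\mathbf P_{\mathcal I}^{-T}=[\mathbf I_{\mathcal I}\ \ \tilde{\mathbf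 H}_{\mathcal I}]$. (For $r=0$: $H=\{0\}$, $\mathbf P_{\mathcal I}=\mathbf I_m$.) For $\mathbf S_r\in\mathrm{Sym}(r;2)$, $\tilde{\mathbf S}_r\in\mathrm{Sym}(m;2)$ denotes the matrix with $\mathbf S_r$ as its upper-left $r\times r$ block and zeros elsewhere. Binary subspace chirps: let $f(\mathbf v,\mathbf w,r)=\prod_{i=r+1}^m(1+v_i+w_i)$ computed in $\mathbb F_2$ and viewed in $\{0,1\}$ (so $f=1$ iff $\mathbf v,\mathbf w$ agree in their last $m-r$ coordinates). For $\mathbf b\in\mathbb F_2^m$, the binary subspace chirp (BSSC) $\mathbf w_{\mathbf b}=\mathbf w^{H,\mathbf S_r}_{\mathbf b}\in\mathbb C^N$ has entries $\mathbf w_{\mathbf b}(\mathbf a)=2^{-r/2}\,i^{\mathbf u^T\tilde{\mathbf S}_r\mathbf u+2\mathbf b^T\mathbf u}\,f(\mathbf b,\mathbf u,r)$ with $\mathbf u=\mathbf P_{\mathcal I}^{-1}\mathbf a\in\mathbb F_2^m$, for $\mathbf a\in\mathbb F_2^m$. The integer $r$ is its rank. *)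

theory Defs
  imports Complex_Main "HOL-Library.Z2" "Jordan_Normal_Form.Matrix"
begin

(* Binary vectors: bit vec of dimension m (coordinates indexed 0..m-1, paper index i is i-1 here).  Complex vectors of C^N are functions on carrier_vec m (binary
   index vectors), complex N x N matrices are functions of two binary index vectors. *)

definition lift :: "bit \<Rightarrow> nat" where
  "lift x = (if x = 1 then 1 else 0)"

definition sym_bin :: "nat \<Rightarrow> bit mat set" where
  "sym_bin r = {S. S \<in> carrier_mat r r \<and> transpose_mat S = S}"

definition colspace :: "bit mat \<Rightarrow> bit vec set" where
  "colspace A = {A *\<^sub>v x | x. x \<in> carrier_vec (dim_col A)}"

definition grassmannian :: "nat \<Rightarrow> nat \<Rightarrow> bit vec set set" where
  "grassmannian m r = {H. \<exists>A \<in> carrier_mat m r. colspace A = H \<and>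
       (\<forall>x \<in> carrier_vec r. A *\<^sub>v x = 0\<^sub>v m \<longrightarrow> x = 0\<^sub>v r)}"

definition cref_piv :: "nat \<Rightarrow> nat \<Rightarrow> bit mat \<Rightarrow> (nat \<Rightarrow> nat) \<Rightarrow> bool" where
  "cref_piv m r A piv \<longleftrightarrow> A \<in> carrier_mat m r \<and>
     (\<forall>j<r. piv j < m) \<and> (\<forall>j k. j < k \<and> k < r \<longrightarrow> piv j < piv k) \<and>
     (\<forall>j<r. \<forall>k<r. A $$ (piv j, k) = (if j = k then 1 else 0)) \<and>
     (\<forall>j<r. \<forall>i<piv j. A $$ (i, j) = 0)"

definition is_cref :: "nat \<Rightarrow> nat \<Rightarrow> bit mat \<Rightarrow> bool" where
  "is_cref m r A \<longleftrightarrow> (\<exists>piv. cref_piv m r A piv)"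

definition H_cref :: "nat \<Rightarrow> nat \<Rightarrow> bit vec set \<Rightarrow> bit mat" where
  "H_cref m r H = (THE A. is_cref m r A \<and> colspace A = H)"

definition piv_set :: "nat \<Rightarrow> nat \<Rightarrow> bit vec set \<Rightarrow> nat set" where
  "piv_set m r H = {i. \<exists>piv. cref_piv m r (H_cref m r H) piv \<and> (\<exists>j<r. i = piv j)}"

(* P_I = [H_I  I_~I] *)
definition P_mat :: "nat \<Rightarrow> nat \<Rightarrow> bit vec set \<Rightarrow> bit mat" where
  "P_mat m r H = mat m m (\<lambda>(i, j). if j < r then H_cref m r H $$ (i, j)
       else (if i = sorted_list_of_set ({..<m} - piv_set m r H) ! (j - r) then 1 else 0))"

definition bin_inv :: "nat \<Rightarrow> bit mat \<Rightarrow> bit mat" where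
  "bin_inv m P = (THE B. B \<in> carrier_mat m m \<and> P * B = 1\<^sub>m m \<and> B * P = 1\<^sub>m m)"

definition embed_sym :: "nat \<Rightarrow> nat \<Rightarrow> bit mat \<Rightarrow> bit mat" where
  "embed_sym m r S = mat m m (\<lambda>(i, j). if i < r \<and> j < r then S $$ (i, j) else 0)"

definition qform :: "nat \<Rightarrow> bit mat \<Rightarrow> bit vec \<Rightarrow> nat" where
  "qform m S v = (\<Sum>j<m. \<Sum>k<m. lift (v $ j) * lift (S $$ (j, k)) * lift (v $ k))"

definition iprod :: "nat \<Rightarrow> bit vec \<Rightarrow> bit vec \<Rightarrow> nat" where
  "iprod m b u = (\<Sum>j<m. lift (b $ j) * lift (u $ j))"

definition f_agree :: "nat \<Rightarrow> bit vec \<Rightarrow> bit vec \<Rightarrow> nat \<Rightarrow> nat" where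
  "f_agree m v w r = lift (\<Prod>i\<in>{r..<m}. 1 + v $ i + w $ i)"

definition bssc :: "nat \<Rightarrow> nat \<Rightarrow> bit vec set \<Rightarrow> bit mat \<Rightarrow> bit vec \<Rightarrow> bit vec \<Rightarrow> complex" where
  "bssc m r H S b a = (let u = bin_inv m (P_mat m r H) *\<^sub>v a in
     complex_of_real (2 powr (- real r / 2)) *
     \<i> ^ (qform m (embed_sym m r S) u + 2 * iprod m b u) * of_nat (f_agree m b u r))"

type_synonym cmat = "bit vec \<Rightarrow> bit vec \<Rightarrow> complex"

definition cmult :: "nat \<Rightarrow> cmat \<Rightarrow> cmat \<Rightarrow> cmat" where
  "cmult m A B = (\<lambda>a c. \<Sum>d\<in>carrier_vec m. A a d * B d c)"

definition capp :: "nat \<Rightarrow> cmat \<Rightarrow> (bit vec \<Rightarrow> complex) \<Rightarrow> bit vec \<Rightarrow> complex" where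
  "capp m A x = (\<lambda>a. \<Sum>d\<in>carrier_vec m. A a d * x d)"

definition std_basis :: "bit vec \<Rightarrow> bit vec \<Rightarrow> complex" where
  "std_basis b = (\<lambda>a. if a = b then 1 else 0)"

definition unitary_c :: "nat \<Rightarrow> cmat \<Rightarrow> bool" where
  "unitary_c m U \<longleftrightarrow> (\<forall>a\<in>carrier_vec m. \<forall>a'\<in>carrier_vec m.
      (\<Sum>c\<in>carrier_vec m. U a c * cnj (U a' c)) = (if a = a' then 1 else 0))"

(* Kronecker product A_0 (x) ... (x) A_{m-1} of 2x2 matrices, w.r.t. e_v = e_{v_1} (x) ... (x) e_{v_m} *)
definition tensor2 :: "nat \<Rightarrow> (nat \<Rightarrow> bit \<Rightarrow> bit \<Rightarrow> complex) \<Rightarrow> cmat" where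
  "tensor2 m A = (\<lambda>a c. \<Prod>i<m. A i (a $ i) (c $ i))"

definition id2 :: "bit \<Rightarrow> bit \<Rightarrow> complex" where
  "id2 x y = (if x = y then 1 else 0)"

definition hadamard2 :: "bit \<Rightarrow> bit \<Rightarrow> complex" where
  "hadamard2 x y = complex_of_real (1 / sqrt 2) * (if x = 1 \<and> y = 1 then -1 else 1)"

definition sigma_z :: "bit \<Rightarrow> bit \<Rightarrow> complex" where
  "sigma_z x y = (if x = y then (if x = 1 then -1 else 1) else 0)"

definition G_D :: "nat \<Rightarrow> bit mat \<Rightarrow> cmat" where
  "G_D m Q = (\<lambda>a c. if a = transpose_mat Q *\<^sub>v c then 1 else 0)"

definition G_U :: "nat \<Rightarrow> bit mat \<Rightarrow> cmat" where
  "G_U m S = (\<lambda>a c. if a = c then \<i> ^ qform m S a else 0)"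

definition G_Omega :: "nat \<Rightarrow> nat \<Rightarrow> cmat" where
  "G_Omega m r = tensor2 m (\<lambda>i. if i < r then hadamard2 else id2)"

definition Z_mat :: "nat \<Rightarrow> nat \<Rightarrow> cmat" where
  "Z_mat m r = tensor2 m (\<lambda>i. if i < r then id2 else sigma_z)"

end

theory Submission
  imports Defs "Jordan_Normal_Form.Determinant" "HOL-Library.FuncSet"
begin

(* Put u = P_I^-1 a. The permutation G_D(P_I^T) sends e_u to e_a and G_U(S~_r) scales e_u by
   i^(u^T S~_r u), so row a of G_D(P_I^T) G_U(S~_r) G_Omega(r) is i^(u^T S~_r u) times row u of
   G_Omega(r). Since G_Omega(r) and Z(m,r) are Kronecker products and Z(m,r) is diagonal, the entry
   (u, b) of G_Omega(r) Z(m,r) factors over the coordinates: 2^(-1/2) (-1)^(u_i b_i) for i <= r and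
   (-1)^(b_i) [u_i = b_i] for i > r, whose product is 2^(-r/2) i^(2 b^T u) f(b, u, r).
   Unitarity follows because G_Omega(r) is a Kronecker product of unitary 2 x 2 matrices whose rows
   are only permuted and scaled by unimodular factors, and Z(m,r) = diag(+-1) gives the sign.
   The only nontrivial input is the invertibility of P_I, which rests on existence (Gauss-Jordan
   elimination of a transposed basis matrix) and uniqueness of the column reduced echelon form. *)

section \<open>Column reduced echelon forms\<close>

definition injective_mat :: "'a :: semiring_0 mat \<Rightarrow> bool" where
  "injective_mat A \<longleftrightarrow>
     (\<forall>x \<in> carrier_vec (dim_col A). A *\<^sub>v x = 0\<^sub>v (dim_row A) \<longrightarrow> x = 0\<^sub>v (dim_col A))"

lemma injective_matD:
  "injective_mat A \<Longrightarrow> x \<in> carrier_vec (dim_col A) \<Longrightarrow> A *\<^sub>v x = 0\<^sub>v (dim_row A) \<Longrightarrow>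
    x = 0\<^sub>v (dim_col A)"
  unfolding injective_mat_def by blast

lemma grassmannianE:
  assumes "H \<in> grassmannian m r"
  obtains A where "A \<in> carrier_mat m r" "colspace A = H" "injective_mat A"
  using assms unfolding grassmannian_def injective_mat_def by fastforce

lemma injective_mat_mult_invertible:
  fixes A :: "'a :: semiring_1 mat"
  assumes A: "A \<in> carrier_mat m r" and R: "R \<in> carrier_mat r r" and R': "R' \<in> carrier_mat r r"
    and inv: "R' * R = 1\<^sub>m r" and inj: "injective_mat A"
  shows "injective_mat (A * R)"
  unfolding injective_mat_def
proof (intro ballI impI)
  fix x assume x: "x \<in> carrier_vec (dim_col (A * R))" and "(A * R) *\<^sub>v x = 0\<^sub>v (dim_row (A * R))"
  then have "A *\<^sub>v (R *\<^sub>v x) = 0\<^sub>v m" using A R by auto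
  then have "R *\<^sub>v x = 0\<^sub>v r" using inj A R x unfolding injective_mat_def by auto
  then have "(R' * R) *\<^sub>v x = 0\<^sub>v r" using R R' x by auto
  with x R show "x = 0\<^sub>v (dim_col (A * R))" unfolding inv by simp
qed

lemma colspace_mult_invertible:
  assumes A: "A \<in> carrier_mat m r" and R: "R \<in> carrier_mat r r" and R': "R' \<in> carrier_mat r r"
    and inv: "R * R' = 1\<^sub>m r"
  shows "colspace (A * R) = colspace A"
proof
  show "colspace (A * R) \<subseteq> colspace A"
  proof
    fix v assume "v \<in> colspace (A * R)"
    then obtain x where x: "x \<in> carrier_vec r" and v: "v = (A * R) *\<^sub>v x"
      unfolding colspace_def using A R by auto
    have "v = A *\<^sub>v (R *\<^sub>v x)" using A R x v by simp
    moreover have "R *\<^sub>v x \<in> carrier_vec (dim_col A)" using A R x by simp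
    ultimately show "v \<in> colspace A" unfolding colspace_def by blast
  qed
  show "colspace A \<subseteq> colspace (A * R)"
  proof
    fix v assume "v \<in> colspace A"
    then obtain x where x: "x \<in> carrier_vec r" and v: "v = A *\<^sub>v x"
      unfolding colspace_def using A by auto
    have "(A * R) *\<^sub>v (R' *\<^sub>v x) = A *\<^sub>v ((R * R') *\<^sub>v x)"
      using A R R' x by simp
    also have "\<dots> = v" using x unfolding inv v by simp
    finally have "v = (A * R) *\<^sub>v (R' *\<^sub>v x)" ..
    moreover have "R' *\<^sub>v x \<in> carrier_vec (dim_col (A * R))" using A R R' x by simp
    ultimately show "v \<in> colspace (A * R)" unfolding colspace_def by blast
  qed
qed

lemma index_mult_mat_vec_sum:
  assumes "A \<in> carrier_mat nr nc" "x \<in> carrier_vec nc" "i < nr"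
  shows "(A *\<^sub>v x) $ i = (\<Sum>j\<in>{0..<nc}. A $$ (i, j) * x $ j)"
  using assms by (auto simp: scalar_prod_def intro: sum.cong)

lemma mult_mat_vec_unit_vec:
  fixes A :: "'a :: semiring_1 mat"
  assumes "A \<in> carrier_mat nr nc" and "k < nc"
  shows "A *\<^sub>v unit_vec nc k = col A k"
  using assms by (intro eq_vecI) auto

lemma cref_piv_carrier: "cref_piv m r A p \<Longrightarrow> A \<in> carrier_mat m r"
  unfolding cref_piv_def by simp

lemma cref_piv_less: "cref_piv m r A p \<Longrightarrow> j < r \<Longrightarrow> p j < m"
  unfolding cref_piv_def by simp

lemma cref_piv_strict_mono: "cref_piv m r A p \<Longrightarrow> j < k \<Longrightarrow> k < r \<Longrightarrow> p j < p k"
  unfolding cref_piv_def by simp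

lemma cref_piv_pivot_row:
  "cref_piv m r A p \<Longrightarrow> j < r \<Longrightarrow> k < r \<Longrightarrow> A $$ (p j, k) = (if j = k then 1 else 0)"
  unfolding cref_piv_def by simp

lemma cref_piv_above_pivot: "cref_piv m r A p \<Longrightarrow> j < r \<Longrightarrow> i < p j \<Longrightarrow> A $$ (i, j) = 0"
  unfolding cref_piv_def by simp

lemma cref_piv_mult_vec_pivot:
  assumes c: "cref_piv m r A p" and x: "x \<in> carrier_vec r" and j: "j < r"
  shows "(A *\<^sub>v x) $ p j = x $ j"
proof -
  have A: "A \<in> carrier_mat m r" and pj: "p j < m"
    using cref_piv_carrier[OF c] cref_piv_less[OF c j] .
  have "row A (p j) = unit_vec r j"
    using A pj j by (intro eq_vecI) (auto simp: cref_piv_pivot_row[OF c j])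
  then have "(A *\<^sub>v x) $ p j = unit_vec r j \<bullet> x"
    using A pj by simp
  also have "\<dots> = x $ j"
    using x j by simp
  finally show ?thesis .
qed

lemma cref_piv_colspace_coords:
  assumes c: "cref_piv m r A p" and v: "v \<in> colspace A"
  shows "v = A *\<^sub>v vec r (\<lambda>j. v $ p j)"
proof -
  from v obtain x where x: "x \<in> carrier_vec r" and vx: "v = A *\<^sub>v x"
    unfolding colspace_def using cref_piv_carrier[OF c] by auto
  have "vec r (\<lambda>j. v $ p j) = x"
    using x cref_piv_mult_vec_pivot[OF c x] vx by (intro eq_vecI) auto
  then show ?thesis using vx by simp
qed

(* Column j of A is 1 in row p j and 0 in the earlier pivot rows. Expanded in the columns of B,
   the columns k < j get coefficient 0, and the columns k >= j vanish in row p j < q k. *)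
lemma cref_pivot_not_less:
  assumes A: "cref_piv m r A p" and B: "cref_piv m r B q"
    and sub: "colspace A \<subseteq> colspace B" and j: "j < r"
    and eq: "\<forall>k<j. p k = q k"
  shows "\<not> p j < q j"
proof
  assume lt: "p j < q j"
  have Ac: "A \<in> carrier_mat m r" and Bc: "B \<in> carrier_mat m r" and pj: "p j < m"
    using cref_piv_carrier[OF A] cref_piv_carrier[OF B] cref_piv_less[OF A j] .
  define a where "a = A *\<^sub>v unit_vec r j"
  have a_piv: "a $ p k = (if k = j then 1 else 0)" if "k < r" for k
    unfolding a_def using cref_piv_mult_vec_pivot[OF A unit_vec_carrier that] j that by simp
  have "a \<in> colspace A"
    using Ac unfolding colspace_def a_def by (auto intro!: exI[of _ "unit_vec r j"])
  with sub have "a \<in> colspace B" by blast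
  then have a_B: "a = B *\<^sub>v vec r (\<lambda>k. a $ q k)"
    by (rule cref_piv_colspace_coords[OF B])
  have "B $$ (p j, k) * a $ q k = 0" if k: "k < r" for k
  proof (cases "k < j")
    case True
    then have "a $ q k = 0" using eq a_piv[OF k] by simp
    then show ?thesis by simp
  next
    case False
    then have "p j < q k"
      using lt cref_piv_strict_mono[OF B, of j k] k by (cases "j = k") auto
    then show ?thesis using cref_piv_above_pivot[OF B k] by simp
  qed
  then have "row B (p j) \<bullet> vec r (\<lambda>k. a $ q k) = 0"
    unfolding scalar_prod_def using Bc pj by (intro sum.neutral) auto
  moreover have "(B *\<^sub>v vec r (\<lambda>k. a $ q k)) $ p j = row B (p j) \<bullet> vec r (\<lambda>k. a $ q k)"
    using Bc pj by simp
  ultimately have "(B *\<^sub>v vec r (\<lambda>k. a $ q k)) $ p j = 0" by simp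
  then show False
    using a_piv[OF j] a_B by simp
qed

lemma cref_pivots_unique:
  assumes A: "cref_piv m r A p" and B: "cref_piv m r B q" and eq: "colspace A = colspace B"
  shows "j < r \<Longrightarrow> p j = q j"
proof (induction j rule: less_induct)
  case (less j)
  then have "\<forall>k<j. p k = q k" by simp
  then show ?case
    using cref_pivot_not_less[OF A B _ less.prems] cref_pivot_not_less[OF B A _ less.prems] eq
    by (metis linorder_neqE_nat order_refl)
qed

lemma cref_unique:
  assumes A: "cref_piv m r A p" and B: "cref_piv m r B q" and eq: "colspace A = colspace B"
  shows "A = B"
proof -
  have Ac: "A \<in> carrier_mat m r" and Bc: "B \<in> carrier_mat m r"
    using cref_piv_carrier[OF A] cref_piv_carrier[OF B] .
  have "col B k = col A k" if k: "k < r" for k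
  proof -
    define v where "v = B *\<^sub>v unit_vec r k"
    have "v \<in> colspace A"
      using eq Bc unfolding colspace_def v_def by auto
    then have "v = A *\<^sub>v vec r (\<lambda>j. v $ p j)"
      by (rule cref_piv_colspace_coords[OF A])
    also have "vec r (\<lambda>j. v $ p j) = unit_vec r k"
      using cref_piv_mult_vec_pivot[OF B unit_vec_carrier] cref_pivots_unique[OF A B eq] k
      unfolding v_def by (intro eq_vecI) auto
    finally show ?thesis
      using Ac Bc k by (simp add: v_def mult_mat_vec_unit_vec)
  qed
  then show ?thesis
    using Ac Bc by (intro eq_matI) (auto simp flip: col_def, metis carrier_matD index_col)
qed

lemma cref_piv_transpose_pivot_fun:
  fixes C :: "bit mat"
  assumes C: "C \<in> carrier_mat r m" and f: "pivot_fun C f m"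
    and inj: "injective_mat (transpose_mat C)"
  shows "cref_piv m r (transpose_mat C) f"
proof -
  note piv = pivot_funD[OF carrier_matD(1)[OF C] f]
  have f_less: "f i < m" if i: "i < r" for i
  proof (rule ccontr)
    assume "\<not> f i < m"
    then have "row C i = 0\<^sub>v m"
      using piv(1)[OF i] pivot_fun_zero_row_iff[OF f C i] by simp
    then have "transpose_mat C *\<^sub>v unit_vec r i = 0\<^sub>v m"
      using C i by (simp add: mult_mat_vec_unit_vec)
    then have "unit_vec r i = (0\<^sub>v r :: bit vec)"
      using injective_matD[OF inj, of "unit_vec r i"] C by simp
    then show False using i by simp
  qed
  have f_mono: "f j < f k" if "j < k" "k < r" for j k
    using pivot_bound[OF carrier_matD(1)[OF C] f, of j "k - j"] f_less[of k] that by auto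
  show ?thesis
    unfolding cref_piv_def
  proof (intro conjI allI impI)
    show "transpose_mat C \<in> carrier_mat m r" using C by simp
    show "transpose_mat C $$ (f j, k) = (if j = k then 1 else 0)" if "j < r" "k < r" for j k
      using C that f_less[of j] piv(4)[of j] piv(5)[of j k] by auto
    show "transpose_mat C $$ (i, j) = 0" if "j < r" "i < f j" for i j
      using C that f_less[of j] piv(2)[of j i] by auto
  qed (use f_less f_mono in auto)
qed

lemma cref_exists:
  assumes "H \<in> grassmannian m r"
  obtains A p where "cref_piv m r A p" "colspace A = H"
proof -
  obtain A0 where A0: "A0 \<in> carrier_mat m r" and H: "colspace A0 = H" and inj: "injective_mat A0"
    using grassmannianE[OF assms] .
  define C where "C = gauss_jordan_single (transpose_mat A0)"
  have T: "transpose_mat A0 \<in> carrier_mat r m" using A0 by simp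
  note gj = gauss_jordan_single[OF T C_def[symmetric]]
  have C: "C \<in> carrier_mat r m" by (fact gj(2))
  obtain f where f: "pivot_fun C f m"
    using gj(3) C unfolding row_echelon_form_def by auto
  obtain P Q where CP: "C = P * transpose_mat A0" and P: "P \<in> carrier_mat r r"
    and Q: "Q \<in> carrier_mat r r" and PQ: "P * Q = 1\<^sub>m r" and QP: "Q * P = 1\<^sub>m r"
    using gj(4) by blast
  have CT: "transpose_mat C = A0 * transpose_mat P"
    using transpose_mult[OF P T] CP by simp
  have Pt: "transpose_mat P \<in> carrier_mat r r" and Qt: "transpose_mat Q \<in> carrier_mat r r"
    using P Q by simp_all
  have "transpose_mat Q * transpose_mat P = 1\<^sub>m r" "transpose_mat P * transpose_mat Q = 1\<^sub>m r"
    using transpose_mult[OF P Q] transpose_mult[OF Q P] PQ QP by (metis transpose_one)+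
  then have "injective_mat (transpose_mat C)" "colspace (transpose_mat C) = H"
    using injective_mat_mult_invertible[OF A0 Pt Qt _ inj] colspace_mult_invertible[OF A0 Pt Qt] H
    unfolding CT by simp_all
  then show ?thesis
    using that cref_piv_transpose_pivot_fun[OF C f] by blast
qed

lemma H_cref_cref_piv:
  assumes "H \<in> grassmannian m r"
  obtains p where "cref_piv m r (H_cref m r H) p" "colspace (H_cref m r H) = H"
proof -
  obtain A p where A: "cref_piv m r A p" "colspace A = H"
    using cref_exists[OF assms] .
  have "H_cref m r H = A"
    unfolding H_cref_def
  proof (rule the_equality)
    show "is_cref m r A \<and> colspace A = H" using A unfolding is_cref_def by blast
    show "B = A" if "is_cref m r B \<and> colspace B = H" for B
      using that cref_unique[OF _ A(1)] A(2) unfolding is_cref_def by blast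
  qed
  then show ?thesis using that A by blast
qed

lemma piv_set_eq:
  assumes "cref_piv m r (H_cref m r H) p"
  shows "piv_set m r H = p ` {..<r}"
proof
  show "piv_set m r H \<subseteq> p ` {..<r}"
    unfolding piv_set_def using cref_pivots_unique[OF _ assms refl] by fastforce
  show "p ` {..<r} \<subseteq> piv_set m r H"
    unfolding piv_set_def using assms by blast
qed

lemma cref_piv_complement_length:
  assumes c: "cref_piv m r A p" and L: "distinct L" "set L = {..<m} - p ` {..<r}"
  shows "r \<le> m" and "length L = m - r"
proof -
  have "inj_on p {..<r}"
    using cref_piv_strict_mono[OF c] by (intro inj_onI) (metis lessThan_iff less_irrefl linorder_neqE_nat)
  then have card: "card (p ` {..<r}) = r" by (simp add: card_image)
  have sub: "p ` {..<r} \<subseteq> {..<m}" using cref_piv_less[OF c] by auto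
  show "r \<le> m" using card card_mono[OF _ sub] by simp
  show "length L = m - r"
    using card card_Diff_subset[OF _ sub]
    by (simp add: distinct_card[OF L(1), symmetric] L(2) finite_subset[OF sub])
qed

definition cref_extension :: "nat \<Rightarrow> nat \<Rightarrow> bit mat \<Rightarrow> nat list \<Rightarrow> bit mat" where
  "cref_extension m r A L =
     mat m m (\<lambda>(i, j). if j < r then A $$ (i, j) else if i = L ! (j - r) then 1 else 0)"

lemma P_mat_eq_cref_extension:
  "P_mat m r H = cref_extension m r (H_cref m r H) (sorted_list_of_set ({..<m} - piv_set m r H))"
  unfolding P_mat_def cref_extension_def ..

(* The simplifier turns sums and products over bit into cardinalities and quantifiers,
   so bit-valued sums are manipulated by explicit rewriting below. *)
lemma cref_extension_mult_vec_index:
  assumes A: "A \<in> carrier_mat m r" and rm: "r \<le> m" and v: "v \<in> carrier_vec m" and i: "i < m"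
  shows "(cref_extension m r A L *\<^sub>v v) $ i
    = (A *\<^sub>v vec r (\<lambda>j. v $ j)) $ i + (\<Sum>t\<in>{0..<m - r}. if i = L ! t then v $ (t + r) else 0)"
proof -
  let ?M = "cref_extension m r A L"
  have shift: "sum g {r..<m} = (\<Sum>t\<in>{0..<m - r}. g (t + r))" for g :: "nat \<Rightarrow> bit"
    using sum.shift_bounds_nat_ivl[of g 0 r "m - r"] rm by simp
  have "(?M *\<^sub>v v) $ i = (\<Sum>j\<in>{0..<m}. ?M $$ (i, j) * v $ j)"
    using i v by (intro index_mult_mat_vec_sum) (auto simp: cref_extension_def)
  also have "\<dots> = (\<Sum>j\<in>{0..<r}. ?M $$ (i, j) * v $ j) + (\<Sum>j\<in>{r..<m}. ?M $$ (i, j) * v $ j)"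
    by (rule sum.atLeastLessThan_concat[symmetric]) (use rm in auto)
  also have "(\<Sum>j\<in>{0..<r}. ?M $$ (i, j) * v $ j)
      = (\<Sum>j\<in>{0..<r}. A $$ (i, j) * vec r (\<lambda>j. v $ j) $ j)"
    using i rm by (intro sum.cong) (auto simp: cref_extension_def)
  also have "\<dots> = (A *\<^sub>v vec r (\<lambda>j. v $ j)) $ i"
    using i A by (intro index_mult_mat_vec_sum[symmetric]) auto
  also have "(\<Sum>j\<in>{r..<m}. ?M $$ (i, j) * v $ j) = (\<Sum>t\<in>{0..<m - r}. ?M $$ (i, t + r) * v $ (t + r))"
    by (rule shift)
  also have "\<dots> = (\<Sum>t\<in>{0..<m - r}. if i = L ! t then v $ (t + r) else 0)"
    using i by (intro sum.cong) (auto simp: cref_extension_def)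
  finally show ?thesis .
qed

lemma cref_extension_injective:
  assumes c: "cref_piv m r A p" and L: "distinct L" "set L = {..<m} - p ` {..<r}"
  shows "injective_mat (cref_extension m r A L)"
  unfolding injective_mat_def
proof (intro ballI impI)
  let ?M = "cref_extension m r A L"
  have dims: "dim_row ?M = m" "dim_col ?M = m" by (simp_all add: cref_extension_def)
  fix v assume "v \<in> carrier_vec (dim_col ?M)" and "?M *\<^sub>v v = 0\<^sub>v (dim_row ?M)"
  then have v: "v \<in> carrier_vec m" and Mv0: "\<And>i. i < m \<Longrightarrow> (?M *\<^sub>v v) $ i = 0"
    unfolding dims by simp_all
  note rm = cref_piv_complement_length(1)[OF c L] and lenL = cref_piv_complement_length(2)[OF c L]
  note Mv = cref_extension_mult_vec_index[OF cref_piv_carrier[OF c] rm v]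
  define x where "x = vec r (\<lambda>j. v $ j)"
  have x0: "x $ k = 0" if k: "k < r" for k
  proof -
    have pk: "p k < m" by (rule cref_piv_less[OF c k])
    have "p k \<notin> set L" using L(2) k by blast
    then have "(\<Sum>t\<in>{0..<m - r}. if p k = L ! t then v $ (t + r) else 0) = 0"
      using lenL by (intro sum.neutral) auto
    then have "x $ k = (?M *\<^sub>v v) $ p k"
      unfolding x_def by (simp only: Mv[OF pk] cref_piv_mult_vec_pivot[OF c vec_carrier k] add_0_right)
    then show ?thesis by (simp only: Mv0[OF pk])
  qed
  then have "x = 0\<^sub>v r" unfolding x_def by (intro eq_vecI) auto
  then have Ax: "A *\<^sub>v x = 0\<^sub>v m" using cref_piv_carrier[OF c] by (intro eq_vecI) auto
  have v_tail: "v $ (t + r) = 0" if t: "t < m - r" for t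
  proof -
    have Lt: "L ! t < m" using t lenL L(2) nth_mem[of t L] by auto
    have "v $ (t + r) = (\<Sum>s\<in>{0..<m - r}. if t = s then v $ (s + r) else 0)"
      using t by (subst sum.delta') auto
    also have "\<dots> = (\<Sum>s\<in>{0..<m - r}. if L ! t = L ! s then v $ (s + r) else 0)"
      using t lenL nth_eq_iff_index_eq[OF L(1)] by (intro sum.cong) auto
    also have "\<dots> = (?M *\<^sub>v v) $ (L ! t)"
      using Ax unfolding x_def by (simp only: Mv[OF Lt] index_zero_vec(1)[OF Lt] add_0)
    finally show ?thesis by (simp only: Mv0[OF Lt])
  qed
  show "v = 0\<^sub>v (dim_col ?M)"
    unfolding dims
  proof (rule eq_vecI)
    fix i assume "i < dim_vec (0\<^sub>v m :: bit vec)"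
    then show "v $ i = 0\<^sub>v m $ i"
      using x0[of i] v_tail[of "i - r"] unfolding x_def by (cases "i < r") auto
  qed (use v in simp)
qed

lemma P_mat_injective:
  assumes "H \<in> grassmannian m r"
  shows "injective_mat (P_mat m r H)"
proof -
  obtain p where c: "cref_piv m r (H_cref m r H) p"
    using H_cref_cref_piv[OF assms] by blast
  show ?thesis
    unfolding P_mat_eq_cref_extension
    by (rule cref_extension_injective[OF c]) (simp_all add: piv_set_eq[OF c])
qed

lemma bin_inv_inverse:
  assumes P: "P \<in> carrier_mat m m" and inj: "injective_mat P"
  shows "bin_inv m P \<in> carrier_mat m m" "P * bin_inv m P = 1\<^sub>m m" "bin_inv m P * P = 1\<^sub>m m"
proof -
  have "det P \<noteq> 0"
    using det_0_iff_vec_prod_zero_field[OF P] injective_matD[OF inj] P by auto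
  then obtain B where B: "B \<in> carrier_mat m m" "P * B = 1\<^sub>m m" "B * P = 1\<^sub>m m"
    using det_non_zero_imp_unit[OF P, of "()"] unfolding Units_def ring_mat_def by auto
  have "bin_inv m P = B"
    unfolding bin_inv_def
  proof (rule the_equality)
    show "B \<in> carrier_mat m m \<and> P * B = 1\<^sub>m m \<and> B * P = 1\<^sub>m m" using B by simp
    show "B' = B" if "B' \<in> carrier_mat m m \<and> P * B' = 1\<^sub>m m \<and> B' * P = 1\<^sub>m m" for B'
    proof -
      from that have B': "B' \<in> carrier_mat m m" "B' * P = 1\<^sub>m m" by simp_all
      have "B' = B' * (P * B)" using B' B by simp
      also have "\<dots> = (B' * P) * B" by (rule assoc_mult_mat[symmetric, OF B'(1) P B(1)])
      finally show ?thesis using B' B by simp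
    qed
  qed
  then show "bin_inv m P \<in> carrier_mat m m" "P * bin_inv m P = 1\<^sub>m m" "bin_inv m P * P = 1\<^sub>m m"
    using B by simp_all
qed

lemma inj_on_mult_mat_vec:
  fixes P Q :: "'a :: semiring_1 mat"
  assumes P: "P \<in> carrier_mat n n" and Q: "Q \<in> carrier_mat n n" and PQ: "P * Q = 1\<^sub>m n"
  shows "inj_on (\<lambda>a. Q *\<^sub>v a) (carrier_vec n)"
proof (rule inj_onI)
  fix a a' assume a: "a \<in> carrier_vec n" and a': "a' \<in> carrier_vec n" and eq: "Q *\<^sub>v a = Q *\<^sub>v a'"
  have "a = (P * Q) *\<^sub>v a" using a by (simp add: PQ)
  also have "\<dots> = (P * Q) *\<^sub>v a'" using P Q a a' eq by simp
  also have "\<dots> = a'" using a' by (simp add: PQ)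
  finally show "a = a'" .
qed

section \<open>Matrices indexed by F_2^m\<close>

lemma UNIV_bit: "(UNIV :: bit set) = {0, 1}"
  by (auto intro: bit.exhaust)

lemma finite_UNIV_bit [simp]: "finite (UNIV :: bit set)"
  by (simp add: UNIV_bit)

lemma sum_UNIV_bit: "(\<Sum>x\<in>UNIV. f x) = f (0 :: bit) + f 1"
  by (simp add: UNIV_bit)

lemma bij_betw_vec_PiE:
  "bij_betw (\<lambda>c. restrict (($) c) {..<m}) (carrier_vec m) (PiE {..<m} (\<lambda>_. UNIV))"
  by (rule bij_betw_byWitness[where f' = "vec m"])
    (auto simp: PiE_def extensional_def fun_eq_iff intro!: eq_vecI)

lemma finite_carrier_vec:
  assumes "finite (UNIV :: 'a set)"
  shows "finite (carrier_vec m :: 'a vec set)"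
proof -
  have "finite (PiE {..<m} (\<lambda>_. UNIV :: 'a set))"
    using assms by (intro finite_PiE) auto
  then show ?thesis by (simp add: bij_betw_finite[OF bij_betw_vec_PiE])
qed

lemma sum_carrier_vec_prod:
  fixes F :: "nat \<Rightarrow> 'a \<Rightarrow> 'b :: comm_semiring_1"
  assumes "finite (UNIV :: 'a set)"
  shows "(\<Sum>c\<in>carrier_vec m. \<Prod>i<m. F i (c $ i)) = (\<Prod>i<m. \<Sum>x\<in>UNIV. F i x)"
proof -
  have "(\<Sum>c\<in>carrier_vec m. \<Prod>i<m. F i (c $ i))
      = (\<Sum>c\<in>carrier_vec m. (\<lambda>g. \<Prod>i<m. F i (g i)) (restrict (($) c) {..<m}))"
    by (rule sum.cong) auto
  also have "\<dots> = (\<Sum>g\<in>PiE {..<m} (\<lambda>_. UNIV). \<Prod>i<m. F i (g i))"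
    by (rule sum.reindex_bij_betw[OF bij_betw_vec_PiE])
  also have "\<dots> = (\<Prod>i<m. \<Sum>x\<in>UNIV. F i x)"
    using assms by (intro prod_sum_PiE[symmetric]) auto
  finally show ?thesis .
qed

lemma prod_vec_eq_indicator:
  assumes "a \<in> carrier_vec m" "a' \<in> carrier_vec m"
  shows "(\<Prod>i<m. if a $ i = a' $ i then 1 else 0) = (if a = a' then 1 else (0 :: 'b :: comm_semiring_1))"
proof (cases "a = a'")
  case False
  then obtain i where "i < m" "a $ i \<noteq> a' $ i"
    using assms by (metis carrier_vecD eq_vecI)
  then have "(\<Prod>i<m. if a $ i = a' $ i then 1 else 0) = (0 :: 'b)"
    by (intro prod_zero) auto
  then show ?thesis using False by simp
qed simp

lemma tensor2_unitary:
  assumes orth: "\<And>i x y. i < m \<Longrightarrow> (\<Sum>z\<in>UNIV. A i x z * cnj (A i y z)) = (if x = y then 1 else 0)"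
  shows "unitary_c m (tensor2 m A)"
  unfolding unitary_c_def
proof (intro ballI)
  fix a a' :: "bit vec" assume a: "a \<in> carrier_vec m" and a': "a' \<in> carrier_vec m"
  have "(\<Sum>c\<in>carrier_vec m. tensor2 m A a c * cnj (tensor2 m A a' c))
      = (\<Sum>c\<in>carrier_vec m. \<Prod>i<m. A i (a $ i) (c $ i) * cnj (A i (a' $ i) (c $ i)))"
    unfolding tensor2_def by (simp add: prod.distrib)
  also have "\<dots> = (\<Prod>i<m. \<Sum>z\<in>UNIV. A i (a $ i) z * cnj (A i (a' $ i) z))"
    by (rule sum_carrier_vec_prod) simp
  also have "\<dots> = (\<Prod>i<m. if a $ i = a' $ i then 1 else 0)"
    using orth by simp
  also have "\<dots> = (if a = a' then 1 else 0)"
    by (rule prod_vec_eq_indicator[OF a a'])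
  finally show "(\<Sum>c\<in>carrier_vec m. tensor2 m A a c * cnj (tensor2 m A a' c)) = (if a = a' then 1 else 0)" .
qed

lemma tensor2_diagonal:
  assumes diag: "\<And>i x y. i < m \<Longrightarrow> x \<noteq> y \<Longrightarrow> A i x y = 0"
    and "c \<in> carrier_vec m" "d \<in> carrier_vec m" "d \<noteq> c"
  shows "tensor2 m A d c = 0"
proof -
  obtain i where "i < m" "d $ i \<noteq> c $ i"
    using assms(2-4) by (metis carrier_vecD eq_vecI)
  then show ?thesis
    unfolding tensor2_def using diag by (intro prod_zero) auto
qed

lemma cmult_tensor2_diagonal:
  assumes diag: "\<And>i x y. i < m \<Longrightarrow> x \<noteq> y \<Longrightarrow> A i x y = 0" and c: "c \<in> carrier_vec m"
  shows "cmult m B (tensor2 m A) a c = B a c * tensor2 m A c c"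
proof -
  have "cmult m B (tensor2 m A) a c = (\<Sum>d\<in>carrier_vec m. if d = c then B a c * tensor2 m A c c else 0)"
    unfolding cmult_def using tensor2_diagonal[OF diag c] by (intro sum.cong) auto
  also have "\<dots> = B a c * tensor2 m A c c"
    using c finite_carrier_vec[OF finite_UNIV_bit] by simp
  finally show ?thesis .
qed

lemma capp_std_basis:
  assumes "b \<in> carrier_vec m"
  shows "capp m A (std_basis b) a = A a b"
  unfolding capp_def std_basis_def using assms finite_carrier_vec[OF finite_UNIV_bit]
  by (simp add: if_distrib cong: if_cong)

lemma cmult_row_cong:
  assumes "\<And>d. A a d = A' a' d"
  shows "cmult m A B a c = cmult m A' B a' c"
  unfolding cmult_def using assms by simp

lemma cmult_G_D_transpose:
  assumes P: "P \<in> carrier_mat m m" and Q: "Q \<in> carrier_mat m m"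
    and PQ: "P * Q = 1\<^sub>m m" and QP: "Q * P = 1\<^sub>m m" and a: "a \<in> carrier_vec m"
  shows "cmult m (G_D m (transpose_mat P)) B a c = B (Q *\<^sub>v a) c"
proof -
  have "a = P *\<^sub>v d \<longleftrightarrow> d = Q *\<^sub>v a" if d: "d \<in> carrier_vec m" for d
  proof
    assume "a = P *\<^sub>v d"
    then have "Q *\<^sub>v a = (Q * P) *\<^sub>v d" using P Q d by simp
    then show "d = Q *\<^sub>v a" using QP d by simp
  next
    assume "d = Q *\<^sub>v a"
    then have "P *\<^sub>v d = (P * Q) *\<^sub>v a" using P Q a by simp
    then show "a = P *\<^sub>v d" using PQ a by simp
  qed
  then have "cmult m (G_D m (transpose_mat P)) B a c
      = (\<Sum>d\<in>carrier_vec m. if d = Q *\<^sub>v a then B (Q *\<^sub>v a) c else 0)"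
    unfolding cmult_def G_D_def by (intro sum.cong) auto
  also have "\<dots> = B (Q *\<^sub>v a) c"
    using Q a finite_carrier_vec[OF finite_UNIV_bit] by simp
  finally show ?thesis .
qed

lemma cmult_G_U:
  assumes "a \<in> carrier_vec m"
  shows "cmult m (G_U m S) B a c = \<i> ^ qform m S a * B a c"
proof -
  have "cmult m (G_U m S) B a c = (\<Sum>d\<in>carrier_vec m. if d = a then \<i> ^ qform m S a * B a c else 0)"
    unfolding cmult_def G_U_def by (intro sum.cong) auto
  also have "\<dots> = \<i> ^ qform m S a * B a c"
    using assms finite_carrier_vec[OF finite_UNIV_bit] by simp
  finally show ?thesis .
qed

lemma cmult_G_D_G_U:
  assumes P: "P \<in> carrier_mat m m" and Q: "Q \<in> carrier_mat m m"
    and PQ: "P * Q = 1\<^sub>m m" and QP: "Q * P = 1\<^sub>m m" and a: "a \<in> carrier_vec m"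
  shows "cmult m (cmult m (G_D m (transpose_mat P)) (G_U m S)) B a c
    = \<i> ^ qform m S (Q *\<^sub>v a) * B (Q *\<^sub>v a) c"
proof -
  have "cmult m (cmult m (G_D m (transpose_mat P)) (G_U m S)) B a c = cmult m (G_U m S) B (Q *\<^sub>v a) c"
    by (rule cmult_row_cong) (rule cmult_G_D_transpose[OF P Q PQ QP a])
  also have "\<dots> = \<i> ^ qform m S (Q *\<^sub>v a) * B (Q *\<^sub>v a) c"
    using a Q by (simp add: cmult_G_U)
  finally show ?thesis .
qed

lemma unitary_cD:
  "unitary_c m U \<Longrightarrow> a \<in> carrier_vec m \<Longrightarrow> a' \<in> carrier_vec m \<Longrightarrow>
    (\<Sum>c\<in>carrier_vec m. U a c * cnj (U a' c)) = (if a = a' then 1 else 0)"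
  unfolding unitary_c_def by blast

lemma unitary_c_scale_permute_rows:
  assumes V: "unitary_c m V" and \<sigma>: "\<sigma> ` carrier_vec m \<subseteq> carrier_vec m" "inj_on \<sigma> (carrier_vec m)"
    and \<phi>: "\<And>a. a \<in> carrier_vec m \<Longrightarrow> \<phi> a * cnj (\<phi> a) = 1"
    and U: "\<And>a c. a \<in> carrier_vec m \<Longrightarrow> U a c = \<phi> a * V (\<sigma> a) c"
  shows "unitary_c m U"
  unfolding unitary_c_def
proof (intro ballI)
  fix a a' :: "bit vec" assume a: "a \<in> carrier_vec m" and a': "a' \<in> carrier_vec m"
  have "(\<Sum>c\<in>carrier_vec m. U a c * cnj (U a' c))
      = \<phi> a * cnj (\<phi> a') * (\<Sum>c\<in>carrier_vec m. V (\<sigma> a) c * cnj (V (\<sigma> a') c))"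
    by (simp add: U[OF a] U[OF a'] sum_distrib_left mult_ac)
  also have "\<dots> = \<phi> a * cnj (\<phi> a') * (if \<sigma> a = \<sigma> a' then 1 else 0)"
    using \<sigma>(1) a a' by (subst unitary_cD[OF V]) auto
  also have "\<dots> = (if a = a' then 1 else 0)"
    using \<phi>[OF a] inj_onD[OF \<sigma>(2) _ a a'] by auto
  finally show "(\<Sum>c\<in>carrier_vec m. U a c * cnj (U a' c)) = (if a = a' then 1 else 0)" .
qed

section \<open>Binary subspace chirps\<close>

lemma hadamard2_orthonormal: "(\<Sum>z\<in>UNIV. hadamard2 x z * cnj (hadamard2 y z)) = (if x = y then 1 else 0)"
proof -
  have half: "complex_of_real (1 / sqrt 2) * complex_of_real (1 / sqrt 2) = 1 / 2"
    by (simp flip: of_real_mult)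
  show ?thesis
    unfolding sum_UNIV_bit using half by (cases x; cases y) (simp_all add: hadamard2_def)
qed

lemma id2_orthonormal: "(\<Sum>z\<in>UNIV. id2 x z * cnj (id2 y z)) = (if x = y then 1 else 0)"
  unfolding sum_UNIV_bit by (cases x; cases y) (simp_all add: id2_def)

lemma unitary_G_Omega: "unitary_c m (G_Omega m r)"
  unfolding G_Omega_def by (rule tensor2_unitary) (simp add: hadamard2_orthonormal id2_orthonormal)

lemma Z_mat_sign: "Z_mat m r b b = 1 \<or> Z_mat m r b b = -1"
proof -
  have "(Z_mat m r b b)\<^sup>2 = (\<Prod>i<m. ((if i < r then id2 else sigma_z) (b $ i) (b $ i))\<^sup>2)"
    unfolding Z_mat_def tensor2_def by (rule prod_power_distrib)
  also have "\<dots> = 1"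
    by (intro prod.neutral) (simp add: id2_def sigma_z_def)
  finally show ?thesis by (simp add: power2_eq_1_iff)
qed

lemma i_pow_mult_cnj: "\<i> ^ n * cnj (\<i> ^ n) = 1"
  by (simp flip: power_mult_distrib)

lemma lift_mult: "lift (x * y) = lift x * lift y"
  by (cases x; cases y) (simp_all add: lift_def)

lemma lift_prod: "lift (\<Prod>i\<in>A. x i) = (\<Prod>i\<in>A. lift (x i))"
proof (induction A rule: infinite_finite_induct)
  case (insert a A)
  have "lift (\<Prod>i\<in>insert a A. x i) = lift (x a * (\<Prod>i\<in>A. x i))"
    using insert.hyps by (subst prod.insert) simp_all
  also have "\<dots> = (\<Prod>i\<in>insert a A. lift (x i))"
    by (simp only: lift_mult insert.IH prod.insert[OF insert.hyps])
  finally show ?case .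
qed (simp_all add: lift_def)

lemma two_powr_neg_half: "2 powr (- real r / 2) = (1 / sqrt 2) ^ r"
proof -
  have "1 / sqrt 2 = (2 :: real) powr (- 1 / 2)"
    by (simp add: powr_minus_divide powr_half_sqrt[symmetric])
  then have "(1 / sqrt 2) ^ r = 2 powr (- 1 / 2 * real r)"
    by (simp add: powr_realpow[symmetric] powr_powr)
  then show ?thesis by simp
qed

lemma G_Omega_Z_mat_factor:
  "(if i < r then hadamard2 else id2) u b * (if i < r then id2 else sigma_z) b b
     = (if i < r then complex_of_real (1 / sqrt 2) else of_nat (lift (1 + b + u))) * \<i> ^ (2 * (lift b * lift u))"
  by (cases u; cases b) (simp_all add: hadamard2_def id2_def sigma_z_def lift_def)

lemma G_Omega_Z_mat_entry:
  assumes rm: "r \<le> m"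
  shows "G_Omega m r u b * Z_mat m r b b
    = complex_of_real (2 powr (- real r / 2)) * \<i> ^ (2 * iprod m b u) * of_nat (f_agree m b u r)"
proof -
  let ?c = "complex_of_real (1 / sqrt 2)"
  have split: "(\<Prod>i<m. if i < r then ?c else g i) = ?c ^ r * (\<Prod>i\<in>{r..<m}. g i)" for g
  proof -
    have "(\<Prod>i<m. if i < r then ?c else g i)
        = (\<Prod>i\<in>{0..<r}. if i < r then ?c else g i) * (\<Prod>i\<in>{r..<m}. if i < r then ?c else g i)"
      unfolding lessThan_atLeast0 by (rule prod.atLeastLessThan_concat[symmetric]) (use rm in auto)
    also have "(\<Prod>i\<in>{0..<r}. if i < r then ?c else g i) = ?c ^ r"
      by simp
    also have "(\<Prod>i\<in>{r..<m}. if i < r then ?c else g i) = (\<Prod>i\<in>{r..<m}. g i)"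
      by (intro prod.cong) auto
    finally show ?thesis .
  qed
  have "G_Omega m r u b * Z_mat m r b b
      = (\<Prod>i<m. (if i < r then ?c else of_nat (lift (1 + b $ i + u $ i)))
                  * \<i> ^ (2 * (lift (b $ i) * lift (u $ i))))"
    unfolding G_Omega_def Z_mat_def tensor2_def
    by (simp only: prod.distrib[symmetric] G_Omega_Z_mat_factor)
  also have "\<dots> = ?c ^ r * (\<Prod>i\<in>{r..<m}. of_nat (lift (1 + b $ i + u $ i))) * \<i> ^ (2 * iprod m b u)"
    by (simp add: prod.distrib split iprod_def sum_distrib_left power_sum)
  also have "\<dots> = complex_of_real (2 powr (- real r / 2)) * \<i> ^ (2 * iprod m b u) * of_nat (f_agree m b u r)"
  proof -
    have "of_nat (f_agree m b u r) = (\<Prod>i\<in>{r..<m}. of_nat (lift (1 + b $ i + u $ i)) :: complex)"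
      unfolding f_agree_def by (simp only: lift_prod of_nat_prod)
    moreover have "complex_of_real (2 powr (- real r / 2)) = ?c ^ r"
      by (simp only: two_powr_neg_half of_real_power)
    ultimately show ?thesis by (simp only: mult_ac)
  qed
  finally show ?thesis .
qed

theorem mainTheorem4:
  fixes m r :: nat and H :: "bit vec set" and S :: "bit mat" and b :: "bit vec"
  assumes "m \<ge> 1" and "r \<le> m"
    and "H \<in> grassmannian m r"
    and "S \<in> sym_bin r"
    and "b \<in> carrier_vec m"
  shows "(\<forall>a\<in>carrier_vec m. bssc m r H S b a =
            capp m (cmult m (cmult m (cmult m (G_D m (transpose_mat (P_mat m r H)))
                    (G_U m (embed_sym m r S))) (G_Omega m r)) (Z_mat m r)) (std_basis b) a)
       \<and> unitary_c m (cmult m (cmult m (G_D m (transpose_mat (P_mat m r H)))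
                    (G_U m (embed_sym m r S))) (G_Omega m r))
       \<and> (\<exists>s::complex. (s = 1 \<or> s = -1) \<and> (\<forall>a\<in>carrier_vec m. bssc m r H S b a =
            s * cmult m (cmult m (G_D m (transpose_mat (P_mat m r H)))
                    (G_U m (embed_sym m r S))) (G_Omega m r) a b))"
proof -
  define P where "P = P_mat m r H"
  define Q where "Q = bin_inv m P"
  define U where "U = cmult m (cmult m (G_D m (transpose_mat P)) (G_U m (embed_sym m r S))) (G_Omega m r)"
  have P: "P \<in> carrier_mat m m" unfolding P_def P_mat_def by simp
  note Q = bin_inv_inverse[OF P P_mat_injective[OF assms(3), folded P_def], folded Q_def]
  have U: "U a c = \<i> ^ qform m (embed_sym m r S) (Q *\<^sub>v a) * G_Omega m r (Q *\<^sub>v a) c"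
    if "a \<in> carrier_vec m" for a c
    unfolding U_def by (rule cmult_G_D_G_U[OF P Q that])
  have chirp: "bssc m r H S b a = U a b * Z_mat m r b b" if a: "a \<in> carrier_vec m" for a
    unfolding bssc_def Let_def U[OF a] mult.assoc G_Omega_Z_mat_entry[OF assms(2)]
    by (simp add: P_def Q_def power_add mult_ac)
  have UZ: "capp m (cmult m U (Z_mat m r)) (std_basis b) a = U a b * Z_mat m r b b" for a
    unfolding capp_std_basis[OF assms(5)] Z_mat_def
    by (rule cmult_tensor2_diagonal[OF _ assms(5)]) (simp add: id2_def sigma_z_def)
  have "unitary_c m U"
    using P Q by (intro unitary_c_scale_permute_rows[OF unitary_G_Omega _ inj_on_mult_mat_vec i_pow_mult_cnj U]) auto
  moreover have "\<forall>a\<in>carrier_vec m. bssc m r H S b a = capp m (cmult m U (Z_mat m r)) (std_basis b) a"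
    using chirp UZ by simp
  moreover have "\<forall>a\<in>carrier_vec m. bssc m r H S b a = Z_mat m r b b * U a b"
    using chirp by (simp add: mult.commute)
  ultimately show ?thesis
    using Z_mat_sign[of m r b] unfolding U_def P_def by blast
qed

end
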